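(* Fix positive integers $(m_1,m_2,\dots)$. With probability at least $1-\delta$ over the random samples $(x_1,x_2,\dots)$ drawn i.i.d. from $D_X$, \[V_{\widetilde P,\pi,t}\le(1+\lambda)\widehat V_{\widetilde P,\pi,t}+\Bigl(5+\frac1{2\lambda}\Bigr)\cdot\frac{(m_t+1)\log N+\log\frac{2t^2}{\delta}}{\mu_t\,(t-1)}\] for all $\lambda>0$, all $t\ge1$, all $\pi\in\Pi$, and all distributions $\widetilde P\in\mathcal S_{m_t}$.
   Context: $A$ is a set of $K$ actions, $X$ a set of contexts, $\Pi$ a finite set of $N$ policies $\pi:X\to A$, $D_X$ a distribution on $X$, $\delta\in(0,1)$. $C_t=2\log(Nt/\delta)$, $\mu_t=\min\{\frac1{2K},\sqrt{C_t/(2Kt)}\}$. For a distribution $P$ over $\Pi$, $W_P(x,a)=\sum_{\pi:\pi(x)=a}P(\pi)$, and $V_{P,\pi,t}=\mathbb{E}_{x\sim D_X}[1/((1-K\mu_t)W_P(x,\pi(x))+\mu_t)]$, $\widehat V_{P,\pi,t}=\frac1{t-1}\sum_{i=1}^{t-1}1/((1-K\mu_t)W_P(x_i,\pi(x_i))+\mu_t)$. For a positive integer $m$, $\mathcal S_m$ is the set of distributions over $\Pi$ of the form $\widetilde P(\pi)=\frac1m\sum_{i=1}^m\mathbb{I}(\pi=\pi_i)$ for some $\pi_1,\dots,\pi_m\in\Pi$. *)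

theory Defs
  imports "HOL-Probability.Probability"
begin

definition Cconst :: "nat \<Rightarrow> real \<Rightarrow> nat \<Rightarrow> real" where
  "Cconst N \<delta> t = 2 * ln (real N * real t / \<delta>)"

definition mu :: "nat \<Rightarrow> nat \<Rightarrow> real \<Rightarrow> nat \<Rightarrow> real" where
  "mu K N \<delta> t = min (1 / (2 * real K)) (sqrt (Cconst N \<delta> t / (2 * real K * real t)))"

definition W :: "('x \<Rightarrow> 'a) set \<Rightarrow> (('x \<Rightarrow> 'a) \<Rightarrow> real) \<Rightarrow> 'x \<Rightarrow> 'a \<Rightarrow> real" where
  "W Pol P x a = (\<Sum>\<pi>\<in>{\<pi>\<in>Pol. \<pi> x = a}. P \<pi>)"

definition Vval :: "'x measure \<Rightarrow> ('x \<Rightarrow> 'a) set \<Rightarrow> nat \<Rightarrow> real \<Rightarrow>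
    (('x \<Rightarrow> 'a) \<Rightarrow> real) \<Rightarrow> ('x \<Rightarrow> 'a) \<Rightarrow> real" where
  "Vval D Pol K m P \<pi> =
     (\<integral>x. 1 / ((1 - real K * m) * W Pol P x (\<pi> x) + m) \<partial>D)"

definition Vhat :: "(nat \<Rightarrow> 'x) \<Rightarrow> ('x \<Rightarrow> 'a) set \<Rightarrow> nat \<Rightarrow> real \<Rightarrow> nat \<Rightarrow>
    (('x \<Rightarrow> 'a) \<Rightarrow> real) \<Rightarrow> ('x \<Rightarrow> 'a) \<Rightarrow> real" where
  "Vhat xs Pol K m t P \<pi> =
     (1 / (real t - 1)) *
       (\<Sum>i\<in>{1..t-1}. 1 / ((1 - real K * m) * W Pol P (xs i) (\<pi> (xs i)) + m))"

definition Smset :: "('x \<Rightarrow> 'a) set \<Rightarrow> nat \<Rightarrow> (('x \<Rightarrow> 'a) \<Rightarrow> real) set" where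
  "Smset Pol m = {P. \<exists>ps :: nat \<Rightarrow> ('x \<Rightarrow> 'a). (\<forall>i\<in>{1..m}. ps i \<in> Pol) \<and>
       P = (\<lambda>\<pi>. (1 / real m) * real (card {i\<in>{1..m}. \<pi> = ps i}))}"

end

theory Submission
  imports Defs
begin

text \<open>For fixed \<open>t\<close>, \<open>\<pi>\<close> and \<open>P\<close>, the estimate \<open>Vhat\<close> is the mean of \<open>t - 1\<close> i.i.d. copies of the
  weight \<open>1 / ((1 - K\<mu>\<^sub>t) W\<^sub>P(x, \<pi>(x)) + \<mu>\<^sub>t) \<in> [0, 1/\<mu>\<^sub>t]\<close>, whose second moment is therefore at most
  \<open>V/\<mu>\<^sub>t\<close>. A Chernoff bound for the lower tail gives \<open>V \<le> Vhat + sqrt (2 V L / (\<mu>\<^sub>t (t - 1)))\<close>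
  except with probability \<open>e\<^sup>-\<^sup>L\<close>; solving this quadratic inequality and applying AM-GM gives
  \<open>V \<le> (1 + \<lambda>) Vhat + (2 + 1/(2\<lambda>)) L / (\<mu>\<^sub>t (t - 1))\<close> for all \<open>\<lambda> > 0\<close> at once.
  With \<open>L = ln (N\<^bsup>m\<^sub>t+1\<^esup> 2t\<^sup>2/\<delta>)\<close>, a union bound over the at most \<open>N\<^bsup>m\<^sub>t+1\<^esup>\<close> pairs \<open>(\<pi>, P)\<close> costs
  \<open>\<delta>/(2t\<^sup>2)\<close> in round \<open>t\<close>, and these sum to at most \<open>\<delta>\<close>.\<close>

lemma summable_inverse_square_shift:
  shows "summable (\<lambda>n. 1 / (real n + 2)\<^sup>2)" and "(\<Sum>n. 1 / (real n + 2)\<^sup>2) \<le> 1"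
proof -
  let ?f = "\<lambda>n. inverse (real (Suc n))"
  have tele: "(\<lambda>n. ?f n - ?f (Suc n)) sums 1"
    using telescope_sums'[OF LIMSEQ_inverse_real_of_nat] by simp
  have le: "1 / (real n + 2)\<^sup>2 \<le> ?f n - ?f (Suc n)" for n
  proof -
    have "?f n - ?f (Suc n) = 1 / ((real n + 1) * (real n + 2))"
      by (simp add: field_simps)
    also have "1 / (real n + 2)\<^sup>2 \<le> \<dots>"
      by (intro divide_left_mono) (auto simp: power2_eq_square)
    finally show ?thesis .
  qed
  show summable: "summable (\<lambda>n. 1 / (real n + 2)\<^sup>2)"
    by (rule summable_comparison_test'[OF sums_summable[OF tele], of 0]) (use le in auto)
  show "(\<Sum>n. 1 / (real n + 2)\<^sup>2) \<le> 1"
    using suminf_le[OF le summable sums_summable[OF tele]] sums_unique[OF tele] by simp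
qed

lemma (in prob_space) prob_avoid_all_ge:
  assumes "range B \<subseteq> events" and "\<And>n. prob (B n) \<le> h n" and "summable h"
  shows "1 - suminf h \<le> prob (space M - (\<Union>n. B n))"
proof -
  have "summable (\<lambda>n. prob (B n))"
    by (rule summable_comparison_test'[OF assms(3), of 0]) (use assms(2) in auto)
  then have "prob (\<Union>n. B n) \<le> suminf h"
    using finite_measure_subadditive_countably[OF assms(1)] suminf_le[OF assms(2) _ assms(3)]
    by linarith
  then show ?thesis
    using prob_compl[of "\<Union>n. B n"] assms(1) by auto
qed

lemma nn_integral_PiM_prod_iid:
  fixes D :: "'x measure" and g :: "'x \<Rightarrow> ennreal"
  assumes D: "prob_space D" and J: "finite J" and [measurable]: "g \<in> borel_measurable D"
  shows "(\<integral>\<^sup>+xs. (\<Prod>i\<in>J. g (xs i)) \<partial>PiM UNIV (\<lambda>_::nat. D)) = (\<integral>\<^sup>+x. g x \<partial>D) ^ card J"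
proof -
  interpret product_prob_space "\<lambda>_::nat. D" UNIV
    by (simp add: D product_prob_space.intro product_prob_space_axioms.intro
        product_sigma_finite.intro prob_space_imp_sigma_finite)
  have "(\<integral>\<^sup>+xs. (\<Prod>i\<in>J. g (xs i)) \<partial>PiM UNIV (\<lambda>_::nat. D))
      = (\<integral>\<^sup>+xs. (\<Prod>i\<in>J. g (restrict xs J i)) \<partial>PiM UNIV (\<lambda>_::nat. D))"
    by (intro nn_integral_cong prod.cong) auto
  also have "\<dots> = (\<integral>\<^sup>+y. (\<Prod>i\<in>J. g (y i))
      \<partial>distr (PiM UNIV (\<lambda>_::nat. D)) (PiM J (\<lambda>_. D)) (\<lambda>xs. restrict xs J))"
    by (subst nn_integral_distr) (auto intro!: measurable_restrict_subset)
  also have "\<dots> = (\<integral>\<^sup>+y. (\<Prod>i\<in>J. g (y i)) \<partial>PiM J (\<lambda>_. D))"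
    using distr_PiM_restrict_finite[OF J] by simp
  also have "\<dots> = (\<Prod>i\<in>J. \<integral>\<^sup>+x. g x \<partial>D)"
    by (rule product_nn_integral_prod) (use J in auto)
  finally show ?thesis by simp
qed

lemma exp_neg_le_quadratic:
  fixes u :: real assumes "0 \<le> u"
  shows "exp (-u) \<le> 1 - u + u\<^sup>2 / 2"
proof -
  let ?f = "\<lambda>u. 1 - u + u\<^sup>2 / 2 - exp (-u)"
  have "?f 0 \<le> ?f u"
  proof (rule DERIV_nonneg_imp_nondecreasing[OF assms])
    fix x :: real assume "0 \<le> x"
    have "(?f has_real_derivative (-1 + x + exp (-x))) (at x)"
      by (auto intro!: derivative_eq_intros simp: power2_eq_square)
    then show "\<exists>y. (?f has_real_derivative y) (at x) \<and> 0 \<le> y"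
      using exp_ge_add_one_self[of "-x"] by auto
  qed
  then show ?thesis by simp
qed

lemma exp_neg_mult_le:
  fixes s z b :: real assumes "0 \<le> s" "0 \<le> z" "z \<le> b"
  shows "exp (- (s * z)) \<le> 1 - s * z + s\<^sup>2 * b * z / 2"
proof -
  have "exp (- (s * z)) \<le> 1 - s * z + (s * z)\<^sup>2 / 2"
    using assms by (intro exp_neg_le_quadratic) simp
  also have "(s * z)\<^sup>2 \<le> s\<^sup>2 * b * z"
    using assms mult_left_mono[of z b "s\<^sup>2 * z"] by (simp add: power2_eq_square algebra_simps)
  finally show ?thesis by simp
qed

lemma nn_integral_exp_neg_le:
  fixes D :: "'x measure" and Z :: "'x \<Rightarrow> real"
  assumes D: "prob_space D" and [measurable]: "Z \<in> borel_measurable D"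
    and Z: "\<And>x. 0 \<le> Z x" "\<And>x. Z x \<le> b" and s: "0 \<le> s"
  shows "(\<integral>\<^sup>+x. exp (- (s * Z x)) \<partial>D) \<le> exp (- s * integral\<^sup>L D Z + s\<^sup>2 * b * integral\<^sup>L D Z / 2)"
proof -
  interpret D: prob_space D by (rule D)
  let ?q = "\<lambda>x. 1 - s * Z x + s\<^sup>2 * b * Z x / 2"
  have int: "integrable D Z"
    by (rule D.integrable_const_bound[where B=b]) (use Z in auto)
  have q: "exp (- (s * Z x)) \<le> ?q x" for x
    using exp_neg_mult_le[OF s Z(1) Z(2)] .
  have "(\<integral>\<^sup>+x. exp (- (s * Z x)) \<partial>D) \<le> (\<integral>\<^sup>+x. ?q x \<partial>D)"
    using q by (intro nn_integral_mono ennreal_leI)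
  also have "\<dots> = \<integral>x. ?q x \<partial>D"
    using int q by (intro nn_integral_eq_integral AE_I2) (auto intro: order_trans[OF exp_ge_zero])
  also have "(\<integral>x. ?q x \<partial>D) = 1 - s * integral\<^sup>L D Z + s\<^sup>2 * b * integral\<^sup>L D Z / 2"
    using int by (simp add: D.prob_space)
  also have "\<dots> \<le> exp (- s * integral\<^sup>L D Z + s\<^sup>2 * b * integral\<^sup>L D Z / 2)"
    using exp_ge_add_one_self[of "- s * integral\<^sup>L D Z + s\<^sup>2 * b * integral\<^sup>L D Z / 2"]
    by (simp add: algebra_simps)
  finally show ?thesis by (simp add: ennreal_leI)
qed

lemma iid_mean_lower_tail:
  fixes D :: "'x measure" and Z :: "'x \<Rightarrow> real" and J :: "nat set"
  assumes D: "prob_space D" and Zm[measurable]: "Z \<in> borel_measurable D"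
    and Z: "\<And>x. 0 \<le> Z x" "\<And>x. Z x \<le> b" and b: "0 < b"
    and V: "0 < integral\<^sup>L D Z" and L: "0 < L" and J: "finite J" "J \<noteq> {}"
  defines "V \<equiv> integral\<^sup>L D Z" and "n \<equiv> real (card J)"
  shows "measure (PiM UNIV (\<lambda>_::nat. D))
           {xs \<in> space (PiM UNIV (\<lambda>_::nat. D)). (\<Sum>i\<in>J. Z (xs i)) / n \<le> V - sqrt (2 * (b * L / n) * V)}
         \<le> exp (-L)"
proof -
  interpret M: prob_space "PiM UNIV (\<lambda>_::nat. D)"
    using D by (intro prob_space_PiM) auto
  define M where "M = PiM UNIV (\<lambda>_::nat. D)"
  define \<epsilon> where "\<epsilon> = sqrt (2 * (b * L / n) * V)"
  define s where "s = \<epsilon> / (b * V)"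
  have n: "0 < n" using J by (simp add: n_def card_gt_0_iff)
  have V: "0 < V" using V by (simp add: V_def)
  have \<epsilon>2: "\<epsilon>\<^sup>2 = 2 * b * L * V / n" using b L V n by (simp add: \<epsilon>_def)
  have s: "0 < s" using b L V n by (simp add: s_def \<epsilon>_def)
  text \<open>\<open>s\<close> minimises the Chernoff exponent, whose value there is \<open>-L\<close>.\<close>
  have exponent: "s * (n * (V - \<epsilon>)) + n * (- s * V + s\<^sup>2 * b * V / 2) = -L"
  proof -
    have "s * (n * (V - \<epsilon>)) + n * (- s * V + s\<^sup>2 * b * V / 2) = - n * \<epsilon>\<^sup>2 / (2 * b * V)"
      using b V by (simp add: s_def power2_eq_square field_simps)
    then show ?thesis using b V n L by (simp add: \<epsilon>2 field_simps)
  qed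
  have event: "{xs \<in> space M. (\<Sum>i\<in>J. Z (xs i)) / n \<le> V - \<epsilon>}
      = {xs \<in> space M. (\<Sum>i\<in>J. Z (xs i)) \<le> n * (V - \<epsilon>)}"
    using n by (simp add: pos_divide_le_eq mult.commute)
  have mgf: "(\<integral>\<^sup>+xs. ennreal (exp (- s * (\<Sum>i\<in>J. Z (xs i)))) * indicator (space M) xs \<partial>M)
      \<le> ennreal (exp (n * (- s * V + s\<^sup>2 * b * V / 2)))"
  proof -
    have "(\<integral>\<^sup>+xs. ennreal (exp (- s * (\<Sum>i\<in>J. Z (xs i)))) * indicator (space M) xs \<partial>M)
        = (\<integral>\<^sup>+xs. (\<Prod>i\<in>J. ennreal (exp (- (s * Z (xs i))))) \<partial>M)"
      by (intro nn_integral_cong)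
         (simp add: sum_distrib_left exp_sum[OF J(1), symmetric] prod_ennreal J(1) flip: sum_negf)
    also have "\<dots> = (\<integral>\<^sup>+x. ennreal (exp (- (s * Z x))) \<partial>D) ^ card J"
      unfolding M_def by (rule nn_integral_PiM_prod_iid[OF D J(1)]) simp
    also have "\<dots> \<le> ennreal (exp (- s * V + s\<^sup>2 * b * V / 2)) ^ card J"
      using nn_integral_exp_neg_le[OF D Zm Z(1) Z(2), of s] s
      by (intro power_mono) (auto simp: V_def)
    also have "\<dots> = ennreal (exp (n * (- s * V + s\<^sup>2 * b * V / 2)))"
      by (simp add: n_def ennreal_power flip: exp_of_nat_mult)
    finally show ?thesis .
  qed
  have "emeasure M {xs \<in> space M. (\<Sum>i\<in>J. Z (xs i)) \<le> n * (V - \<epsilon>)}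
      \<le> ennreal (exp (s * (n * (V - \<epsilon>))))
        * (\<integral>\<^sup>+xs. ennreal (exp (- s * (\<Sum>i\<in>J. Z (xs i)))) * indicator (space M) xs \<partial>M)"
    by (rule Chernoff_ineq_nn_integral_le[OF s]) (auto simp: M_def)
  also have "\<dots> \<le> ennreal (exp (s * (n * (V - \<epsilon>)))) * ennreal (exp (n * (- s * V + s\<^sup>2 * b * V / 2)))"
    by (rule mult_left_mono[OF mgf]) simp
  also have "\<dots> = ennreal (exp (-L))"
    by (simp add: exp_add ennreal_mult flip: exponent)
  finally have "measure M {xs \<in> space M. (\<Sum>i\<in>J. Z (xs i)) \<le> n * (V - \<epsilon>)} \<le> exp (-L)"
    by (simp add: M_def M.emeasure_eq_measure)
  then show ?thesis
    unfolding M_def[symmetric] \<epsilon>_def[symmetric] event .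
qed

lemma bound_of_le_add_sqrt:
  fixes V Vh u lam :: real
  assumes u: "0 \<le> u" and V: "0 \<le> V" and Vh: "0 \<le> Vh" and lam: "0 < lam"
    and le: "V \<le> Vh + sqrt (2 * u * V)"
  shows "V \<le> (1 + lam) * Vh + (2 + 1 / (2 * lam)) * u"
proof -
  text \<open>\<open>w\<close> satisfies \<open>w\<^sup>2 \<le> 2u (Vh + w)\<close>, hence \<open>w \<le> 2u + sqrt (2u Vh)\<close>, and by AM-GM
    \<open>sqrt (2u Vh) \<le> c\<close>.\<close>
  define w where "w = sqrt (2 * u * V)"
  define c where "c = lam * Vh + u / (2 * lam)"
  have w2: "w\<^sup>2 = 2 * u * V" using u V by (simp add: w_def)
  have c: "0 \<le> c" using u Vh lam by (simp add: c_def)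
  have "c\<^sup>2 - 2 * u * Vh = (lam * Vh - u / (2 * lam))\<^sup>2"
    using lam by (simp add: c_def power2_eq_square field_simps)
  then have c2: "2 * u * Vh \<le> c\<^sup>2" by (metis diff_ge_0_iff_ge zero_le_power2)
  have "(w - u)\<^sup>2 = 2 * u * V - 2 * u * w + u\<^sup>2"
    by (simp add: w2 power2_diff)
  also have "\<dots> \<le> 2 * u * Vh + u\<^sup>2"
    using mult_left_mono[OF le, of "2 * u"] u by (simp add: w_def distrib_left)
  also have "\<dots> \<le> (u + c)\<^sup>2"
    using c2 mult_nonneg_nonneg[OF u c] by (simp add: power2_sum)
  finally have "w - u \<le> u + c"
    by (rule power2_le_imp_le) (use u c in linarith)
  then show ?thesis
    using le lam by (simp add: w_def c_def distrib_right)
qed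

text \<open>The denominator is the probability that the \<open>\<mu>\<close>-smoothed distribution
  \<open>(1 - K\<mu>) W\<^sub>P + \<mu>\<close> plays the action \<open>\<pi>(x)\<close>.\<close>
definition inv_smoothed_prob ::
    "('x \<Rightarrow> 'a) set \<Rightarrow> nat \<Rightarrow> real \<Rightarrow> (('x \<Rightarrow> 'a) \<Rightarrow> real) \<Rightarrow> ('x \<Rightarrow> 'a) \<Rightarrow> 'x \<Rightarrow> real" where
  "inv_smoothed_prob Pol K m P \<pi> x = 1 / ((1 - real K * m) * W Pol P x (\<pi> x) + m)"

lemma Vval_eq_integral: "Vval D Pol K m P \<pi> = integral\<^sup>L D (inv_smoothed_prob Pol K m P \<pi>)"
  unfolding Vval_def inv_smoothed_prob_def ..

lemma Vhat_eq_mean: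
  "Vhat xs Pol K m t P \<pi> = (\<Sum>i\<in>{1..t-1}. inv_smoothed_prob Pol K m P \<pi> (xs i)) / real (card {1..t-1})"
  by (cases t) (simp_all add: Vhat_def inv_smoothed_prob_def)

lemma W_nonneg: "\<forall>\<pi>\<in>Pol. 0 \<le> P \<pi> \<Longrightarrow> 0 \<le> W Pol P x a"
  unfolding W_def by (rule sum_nonneg) auto

lemma W_le_sum: "finite Pol \<Longrightarrow> \<forall>\<pi>\<in>Pol. 0 \<le> P \<pi> \<Longrightarrow> W Pol P x a \<le> sum P Pol"
  unfolding W_def by (intro sum_mono2) auto

lemma borel_measurable_W:
  fixes D :: "'x measure" and Pol :: "('x \<Rightarrow> 'a) set"
  assumes fin: "finite Pol" "finite A"
    and meas: "\<forall>\<pi>\<in>Pol. \<pi> \<in> measurable D (count_space UNIV)"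
    and range: "\<forall>\<pi>\<in>Pol. \<forall>x. \<pi> x \<in> A" and \<pi>: "\<pi> \<in> Pol"
  shows "(\<lambda>x. W Pol P x (\<pi> x)) \<in> borel_measurable D"
proof -
  define agree where "agree \<pi>' = (\<Union>a\<in>A. (\<pi>' -` {a} \<inter> space D) \<inter> (\<pi> -` {a} \<inter> space D))" for \<pi>'
  have sets: "agree \<pi>' \<in> sets D" if "\<pi>' \<in> Pol" for \<pi>'
    unfolding agree_def using that \<pi> meas fin
    by (intro sets.finite_UN sets.Int measurable_sets[where A="count_space UNIV"]) auto
  have "W Pol P x (\<pi> x) = (\<Sum>\<pi>'\<in>Pol. P \<pi>' * indicator (agree \<pi>') x)" if "x \<in> space D" for x
  proof -
    have "x \<in> agree \<pi>' \<longleftrightarrow> \<pi>' x = \<pi> x" if "\<pi>' \<in> Pol" for \<pi>'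
      unfolding agree_def using \<open>x \<in> space D\<close> range \<pi> that by auto
    moreover have "W Pol P x (\<pi> x) = (\<Sum>\<pi>'\<in>Pol. if \<pi>' x = \<pi> x then P \<pi>' else 0)"
      unfolding W_def using fin by (simp add: sum.inter_filter)
    ultimately show ?thesis
      by (auto simp: indicator_def intro!: sum.cong)
  qed
  moreover have "(\<lambda>x. \<Sum>\<pi>'\<in>Pol. P \<pi>' * indicator (agree \<pi>') x) \<in> borel_measurable D"
    using sets by measurable
  ultimately show ?thesis by (metis (no_types, lifting) measurable_cong)
qed

lemma inv_smoothed_prob_bounds:
  assumes "finite Pol" "\<forall>\<pi>\<in>Pol. 0 \<le> P \<pi>" "0 < m" "real K * m \<le> 1"
  shows "0 < inv_smoothed_prob Pol K m P \<pi> x"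
    and "1 / ((1 - real K * m) * sum P Pol + m) \<le> inv_smoothed_prob Pol K m P \<pi> x"
    and "inv_smoothed_prob Pol K m P \<pi> x \<le> 1 / m"
proof -
  have "m \<le> (1 - real K * m) * W Pol P x (\<pi> x) + m"
    using W_nonneg[OF assms(2)] assms(4) by simp
  moreover have "(1 - real K * m) * W Pol P x (\<pi> x) \<le> (1 - real K * m) * sum P Pol"
    using W_le_sum[OF assms(1,2)] assms(4) by (simp add: mult_left_mono)
  ultimately show "0 < inv_smoothed_prob Pol K m P \<pi> x"
    and "1 / ((1 - real K * m) * sum P Pol + m) \<le> inv_smoothed_prob Pol K m P \<pi> x"
    and "inv_smoothed_prob Pol K m P \<pi> x \<le> 1 / m"
    unfolding inv_smoothed_prob_def using assms(3) by (auto intro!: divide_left_mono)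
qed

lemma borel_measurable_inv_smoothed_prob:
  assumes "finite Pol" "finite A"
    and "\<forall>\<pi>\<in>Pol. \<pi> \<in> measurable D (count_space UNIV)"
    and "\<forall>\<pi>\<in>Pol. \<forall>x. \<pi> x \<in> A" and "\<pi> \<in> Pol"
  shows "inv_smoothed_prob Pol K m P \<pi> \<in> borel_measurable D"
  unfolding inv_smoothed_prob_def using borel_measurable_W[OF assms] by measurable

lemma Smset_nonneg: "P \<in> Smset Pol m \<Longrightarrow> 0 \<le> P \<pi>"
  unfolding Smset_def by auto

lemma finite_Smset_card_le:
  fixes Pol :: "('x \<Rightarrow> 'a) set"
  assumes "finite Pol"
  shows "finite (Smset Pol m)" and "card (Smset Pol m) \<le> card Pol ^ m"
proof -
  define emp where
    "emp ps = (\<lambda>\<pi>. (1 / real m) * real (card {i\<in>{1..m}. \<pi> = ps i}))" for ps :: "nat \<Rightarrow> 'x \<Rightarrow> 'a"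
  have sub: "Smset Pol m \<subseteq> emp ` (PiE {1..m} (\<lambda>_. Pol))"
  proof
    fix P assume "P \<in> Smset Pol m"
    then obtain ps where ps: "\<forall>i\<in>{1..m}. ps i \<in> Pol" "P = emp ps"
      unfolding Smset_def emp_def by blast
    have "emp (restrict ps {1..m}) = emp ps"
      unfolding emp_def by (intro ext) (auto intro!: arg_cong[where f=card])
    moreover have "restrict ps {1..m} \<in> PiE {1..m} (\<lambda>_. Pol)" using ps(1) by auto
    ultimately show "P \<in> emp ` (PiE {1..m} (\<lambda>_. Pol))" using ps(2) by (metis image_eqI)
  qed
  have fin: "finite (PiE {1..m} (\<lambda>_. Pol))" using assms by (simp add: finite_PiE)
  show "finite (Smset Pol m)" using sub fin finite_subset by blast
  have "card (Smset Pol m) \<le> card (emp ` (PiE {1..m} (\<lambda>_. Pol)))"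
    using sub fin by (intro card_mono) auto
  also have "\<dots> \<le> card (PiE {1..m} (\<lambda>_. Pol))" by (rule card_image_le[OF fin])
  finally show "card (Smset Pol m) \<le> card Pol ^ m" by (simp add: card_PiE)
qed

lemma mu_pos:
  assumes "0 < K" "1 \<le> N" "1 \<le> t" "0 < \<delta>" "\<delta> < 1"
  shows "0 < mu K N \<delta> t"
proof -
  have "\<delta> < real N * real t" using assms mult_mono[of 1 "real N" 1 "real t"] by simp
  then have "0 < Cconst N \<delta> t" using assms by (simp add: Cconst_def)
  then show ?thesis using assms by (simp add: mu_def)
qed

lemma card_mult_mu_le: "real K * mu K N \<delta> t \<le> 1 / 2"
proof (cases "K = 0")
  case False
  have "mu K N \<delta> t \<le> 1 / (2 * real K)" by (simp add: mu_def)
  then show ?thesis using False by (simp add: field_simps)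
qed simp

locale policy_sampling =
  fixes D :: "'x measure" and A :: "'a set" and Pol :: "('x \<Rightarrow> 'a) set" and \<delta> :: real
  assumes prob_space_D: "prob_space D"
    and finite_A: "finite A" and A_nonempty: "A \<noteq> {}"
    and finite_Pol: "finite Pol" and Pol_nonempty: "Pol \<noteq> {}"
    and policy_range: "\<forall>\<pi>\<in>Pol. \<forall>x. \<pi> x \<in> A"
    and policy_measurable: "\<forall>\<pi>\<in>Pol. \<pi> \<in> measurable D (count_space UNIV)"
    and \<delta>_pos: "0 < \<delta>" and \<delta>_less_1: "\<delta> < 1"
begin

abbreviation "K \<equiv> card A"
abbreviation "N \<equiv> card Pol"
abbreviation "\<mu> t \<equiv> mu K N \<delta> t"
abbreviation "S \<equiv> PiM UNIV (\<lambda>_::nat. D)"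

lemma prob_space_samples: "prob_space S"
  using prob_space_D by (intro prob_space_PiM) auto

lemma N_ge_1: "1 \<le> N"
  using finite_Pol Pol_nonempty by (simp add: Suc_le_eq card_gt_0_iff)

lemma mu_pos_t: "1 \<le> t \<Longrightarrow> 0 < \<mu> t"
  using finite_A A_nonempty N_ge_1 \<delta>_pos \<delta>_less_1 by (intro mu_pos) (auto simp: card_gt_0_iff)

lemma borel_measurable_inv_smoothed_prob_policy [measurable]:
  "\<pi> \<in> Pol \<Longrightarrow> inv_smoothed_prob Pol K m P \<pi> \<in> borel_measurable D"
  by (rule borel_measurable_inv_smoothed_prob[OF finite_Pol finite_A policy_measurable policy_range])

lemma Vval_pos:
  assumes "1 \<le> t" "\<pi> \<in> Pol" "P \<in> Smset Pol m"
  shows "0 < Vval D Pol K (\<mu> t) P \<pi>"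
proof -
  interpret D: prob_space D by (rule prob_space_D)
  let ?Z = "inv_smoothed_prob Pol K (\<mu> t) P \<pi>"
  let ?c = "1 / ((1 - real K * \<mu> t) * sum P Pol + \<mu> t)"
  have P: "\<forall>\<pi>\<in>Pol. 0 \<le> P \<pi>" using Smset_nonneg[OF assms(3)] by blast
  have \<mu>: "0 < \<mu> t" "real K * \<mu> t \<le> 1"
    using mu_pos_t[OF assms(1)] card_mult_mu_le[of K N \<delta> t] by auto
  have bounds: "?c \<le> ?Z x" "?Z x \<le> 1 / \<mu> t" for x
    using inv_smoothed_prob_bounds[OF finite_Pol P \<mu>] by auto
  have "0 < ?c"
    using \<mu> sum_nonneg[of Pol P] P by (simp add: add_nonneg_pos)
  also have "?c \<le> integral\<^sup>L D ?Z"
  proof -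
    have "integrable D ?Z"
      using assms(2) bounds order_trans[OF _ bounds(1)] \<open>0 < ?c\<close>
      by (intro D.integrable_const_bound[where B="1 / \<mu> t"]) auto
    then show ?thesis
      using integral_mono[of D "\<lambda>_. ?c" ?Z] bounds(1) by (simp add: D.prob_space)
  qed
  finally show ?thesis by (simp add: Vval_eq_integral)
qed

text \<open>\<open>confidence_log m t = ln (N\<^bsup>m+1\<^esup> \<cdot> 2t\<^sup>2/\<delta>)\<close>: \<open>N \<cdot> N\<^sup>m\<close> bounds the number of pairs
  \<open>(\<pi>, P)\<close> with \<open>P \<in> Smset Pol m\<close>, and \<open>\<delta>/(2t\<^sup>2)\<close> is the failure probability allotted to round \<open>t\<close>.\<close>
definition confidence_log :: "nat \<Rightarrow> nat \<Rightarrow> real" where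
  "confidence_log m t = (real m + 1) * ln (real N) + ln (2 * (real t)\<^sup>2 / \<delta>)"

definition confidence_width :: "nat \<Rightarrow> nat \<Rightarrow> real" where
  "confidence_width m t = confidence_log m t / (\<mu> t * (real t - 1))"

lemma confidence_log_pos: "1 \<le> t \<Longrightarrow> 0 < confidence_log m t"
proof -
  assume "1 \<le> t"
  then have "\<delta> < 2 * (real t)\<^sup>2"
    using \<delta>_less_1 mult_mono[of 1 "real t" 1 "real t"] by (simp add: power2_eq_square)
  then have "0 < ln (2 * (real t)\<^sup>2 / \<delta>)" using \<delta>_pos by (intro ln_gt_zero) (simp add: less_divide_eq)
  moreover have "0 \<le> (real m + 1) * ln (real N)" using N_ge_1 by simp
  ultimately show ?thesis by (simp add: confidence_log_def)
qed

lemma confidence_width_nonneg: "2 \<le> t \<Longrightarrow> 0 \<le> confidence_width m t"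
  using confidence_log_pos[of t m] mu_pos_t[of t] by (simp add: confidence_width_def)

lemma exp_neg_confidence_log:
  assumes "1 \<le> t"
  shows "exp (- confidence_log m t) = \<delta> / (2 * (real t)\<^sup>2) / real N ^ (m + 1)"
proof -
  have "confidence_log m t = ln (real N ^ (m + 1)) + ln (2 * (real t)\<^sup>2 / \<delta>)"
    using N_ge_1 ln_realpow[of "real N" "m + 1"] by (simp add: confidence_log_def)
  also have "\<dots> = ln (real N ^ (m + 1) * (2 * (real t)\<^sup>2 / \<delta>))"
    using N_ge_1 assms \<delta>_pos by (intro ln_mult_pos[symmetric]) auto
  finally have "confidence_log m t = ln (real N ^ (m + 1) * (2 * (real t)\<^sup>2 / \<delta>))" .
  moreover have "0 < real N ^ (m + 1) * (2 * (real t)\<^sup>2 / \<delta>)"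
    using N_ge_1 assms \<delta>_pos by simp
  ultimately show ?thesis by (simp add: exp_minus field_simps)
qed

definition deviation_event :: "nat \<Rightarrow> nat \<Rightarrow> ('x \<Rightarrow> 'a) \<Rightarrow> (('x \<Rightarrow> 'a) \<Rightarrow> real) \<Rightarrow> (nat \<Rightarrow> 'x) set" where
  "deviation_event m t \<pi> P = {xs \<in> space S.
     Vhat xs Pol K (\<mu> t) t P \<pi> \<le> Vval D Pol K (\<mu> t) P \<pi>
       - sqrt (2 * confidence_width m t * Vval D Pol K (\<mu> t) P \<pi>)}"

definition any_deviation_event :: "nat \<Rightarrow> nat \<Rightarrow> (nat \<Rightarrow> 'x) set" where
  "any_deviation_event m t = (\<Union>\<pi>\<in>Pol. \<Union>P\<in>Smset Pol m. deviation_event m t \<pi> P)"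

lemma sets_deviation_event: "\<pi> \<in> Pol \<Longrightarrow> deviation_event m t \<pi> P \<in> sets S"
  unfolding deviation_event_def Vhat_eq_mean by measurable

lemma sets_any_deviation_event: "any_deviation_event m t \<in> sets S"
  unfolding any_deviation_event_def
  using finite_Pol finite_Smset_card_le(1)[OF finite_Pol] sets_deviation_event
  by (auto intro!: sets.finite_UN)

lemma measure_deviation_event_le:
  assumes t: "2 \<le> t" and \<pi>: "\<pi> \<in> Pol" and P: "P \<in> Smset Pol m"
  shows "measure S (deviation_event m t \<pi> P) \<le> exp (- confidence_log m t)"
proof -
  let ?Z = "inv_smoothed_prob Pol K (\<mu> t) P \<pi>"
  have \<mu>: "0 < \<mu> t" "real K * \<mu> t \<le> 1"
    using mu_pos_t[of t] t card_mult_mu_le[of K N \<delta> t] by auto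
  have Z: "0 \<le> ?Z x" "?Z x \<le> 1 / \<mu> t" for x
    using inv_smoothed_prob_bounds[OF finite_Pol _ \<mu>, of P \<pi> x] Smset_nonneg[OF P] by auto
  have width: "1 / \<mu> t * confidence_log m t / real (card {1..t-1}) = confidence_width m t"
    using t by (simp add: confidence_width_def of_nat_diff)
  have "measure S {xs \<in> space S. (\<Sum>i\<in>{1..t-1}. ?Z (xs i)) / real (card {1..t-1})
      \<le> integral\<^sup>L D ?Z - sqrt (2 * (1 / \<mu> t * confidence_log m t / real (card {1..t-1})) * integral\<^sup>L D ?Z)}
    \<le> exp (- confidence_log m t)"
    using t Vval_pos[of t \<pi> P m] \<pi> P \<mu>(1) confidence_log_pos[of t m]
    by (intro iid_mean_lower_tail[OF prob_space_D _ Z]) (auto simp: Vval_eq_integral)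
  then show ?thesis
    by (simp only: deviation_event_def Vhat_eq_mean Vval_eq_integral width)
qed

lemma measure_any_deviation_event_le:
  assumes t: "2 \<le> t"
  shows "measure S (any_deviation_event m t) \<le> \<delta> / (2 * (real t)\<^sup>2)"
proof -
  interpret S: prob_space S by (rule prob_space_samples)
  have fin: "finite (Smset Pol m)" and card: "card (Smset Pol m) \<le> N ^ m"
    using finite_Smset_card_le[OF finite_Pol] by auto
  have "measure S (any_deviation_event m t)
      \<le> (\<Sum>\<pi>\<in>Pol. \<Sum>P\<in>Smset Pol m. measure S (deviation_event m t \<pi> P))"
    unfolding any_deviation_event_def
    using finite_Pol fin sets_deviation_event
    by (intro order_trans[OF S.finite_measure_subadditive_finite] sum_mono S.finite_measure_subadditive_finite) auto
  also have "\<dots> \<le> (\<Sum>\<pi>\<in>Pol. \<Sum>P\<in>Smset Pol m. exp (- confidence_log m t))"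
    using measure_deviation_event_le[OF t] by (intro sum_mono) auto
  also have "\<dots> \<le> real N * real (N ^ m) * exp (- confidence_log m t)"
  proof -
    have "real (card (Smset Pol m)) \<le> real N ^ m" using card by (metis of_nat_le_iff of_nat_power)
    then have "real (card (Smset Pol m)) * exp (- confidence_log m t) \<le> real N ^ m * exp (- confidence_log m t)"
      by (rule mult_right_mono) simp
    then show ?thesis by (simp add: mult_left_mono mult.assoc)
  qed
  also have "\<dots> = \<delta> / (2 * (real t)\<^sup>2)"
    using t N_ge_1 by (simp add: exp_neg_confidence_log field_simps)
  finally show ?thesis .
qed

lemma Vval_le_outside_deviation_event:
  assumes xs: "xs \<in> space S - deviation_event m t \<pi> P"
    and t: "2 \<le> t" and \<pi>: "\<pi> \<in> Pol" and P: "P \<in> Smset Pol m" and lam: "0 < lam"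
  shows "Vval D Pol K (\<mu> t) P \<pi>
    \<le> (1 + lam) * Vhat xs Pol K (\<mu> t) t P \<pi> + (5 + 1 / (2 * lam)) * confidence_width m t"
proof -
  let ?V = "Vval D Pol K (\<mu> t) P \<pi>" and ?Vh = "Vhat xs Pol K (\<mu> t) t P \<pi>"
  have u: "0 \<le> confidence_width m t" using confidence_width_nonneg[OF t] .
  have "0 < inv_smoothed_prob Pol K (\<mu> t) P \<pi> x" for x
    using mu_pos_t[of t] t card_mult_mu_le[of K N \<delta> t] Smset_nonneg[OF P]
    by (intro inv_smoothed_prob_bounds(1)[OF finite_Pol]) auto
  then have "0 \<le> ?Vh"
    unfolding Vhat_eq_mean by (intro divide_nonneg_nonneg sum_nonneg) (auto intro: less_imp_le)
  moreover have "?V \<le> ?Vh + sqrt (2 * confidence_width m t * ?V)"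
    using xs by (auto simp: deviation_event_def)
  ultimately have "?V \<le> (1 + lam) * ?Vh + (2 + 1 / (2 * lam)) * confidence_width m t"
    using Vval_pos[of t \<pi> P m] t \<pi> P u lam by (intro bound_of_le_add_sqrt) auto
  also have "\<dots> \<le> (1 + lam) * ?Vh + (5 + 1 / (2 * lam)) * confidence_width m t"
    using u by (intro add_left_mono mult_right_mono) auto
  finally show ?thesis .
qed

end

theorem lemma7:
  fixes D :: "'x measure" and A :: "'a set" and Pol :: "('x \<Rightarrow> 'a) set"
    and \<delta> :: real and ms :: "nat \<Rightarrow> nat"
  assumes "prob_space D"
    and "finite A" and "A \<noteq> {}"
    and "finite Pol" and "Pol \<noteq> {}"
    and "\<forall>\<pi>\<in>Pol. \<forall>x. \<pi> x \<in> A"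
    and "\<forall>\<pi>\<in>Pol. \<pi> \<in> measurable D (count_space UNIV)"
    and "0 < \<delta>" and "\<delta> < 1"
    and "\<forall>t. 0 < ms t"
  shows "\<exists>E\<in>sets (PiM UNIV (\<lambda>_::nat. D)).
           measure (PiM UNIV (\<lambda>_::nat. D)) E \<ge> 1 - \<delta> \<and>
           (\<forall>xs\<in>E. \<forall>lam::real. lam > 0 \<longrightarrow> (\<forall>t::nat. t \<ge> 2 \<longrightarrow>
              (\<forall>\<pi>\<in>Pol. \<forall>P\<in>Smset Pol (ms t).
                 Vval D Pol (card A) (mu (card A) (card Pol) \<delta> t) P \<pi>
                 \<le> (1 + lam) * Vhat xs Pol (card A) (mu (card A) (card Pol) \<delta> t) t P \<pi>
                   + (5 + 1 / (2 * lam)) *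
                     (((real (ms t) + 1) * ln (real (card Pol)) + ln (2 * (real t)\<^sup>2 / \<delta>))
                      / (mu (card A) (card Pol) \<delta> t * (real t - 1))))))"
proof -
  interpret policy_sampling D A Pol \<delta>
    unfolding policy_sampling_def using assms by blast
  interpret S: prob_space S by (rule prob_space_samples)
  define bad where "bad n = any_deviation_event (ms (n + 2)) (n + 2)" for n
  define E where "E = space S - (\<Union>n. bad n)"
  have inv_sq: "summable (\<lambda>n. 1 / (real n + 2)\<^sup>2)" "(\<Sum>n. 1 / (real n + 2)\<^sup>2) \<le> 1"
    by (rule summable_inverse_square_shift)+
  then have sum: "summable (\<lambda>n. \<delta> / 2 * (1 / (real n + 2)\<^sup>2))"
    by (intro summable_mult)
  have bad: "bad n \<in> sets S" "S.prob (bad n) \<le> \<delta> / 2 * (1 / (real n + 2)\<^sup>2)" for n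
    using sets_any_deviation_event measure_any_deviation_event_le[of "n + 2" "ms (n + 2)"]
    by (simp_all add: bad_def add.commute)
  have "1 - (\<Sum>n. \<delta> / 2 * (1 / (real n + 2)\<^sup>2)) \<le> S.prob E"
    unfolding E_def using bad by (intro S.prob_avoid_all_ge[OF _ _ sum]) auto
  moreover have "(\<Sum>n. \<delta> / 2 * (1 / (real n + 2)\<^sup>2)) \<le> \<delta>"
    using suminf_mult[OF inv_sq(1), of "\<delta> / 2"] mult_left_le[OF inv_sq(2), of "\<delta> / 2"] \<delta>_pos
    by linarith
  moreover have "E \<in> sets S"
    unfolding E_def using bad(1) by (intro sets.Diff sets.top sets.countable_UN) auto
  moreover have "xs \<in> space S - deviation_event (ms t) t \<pi> P"
    if "xs \<in> E" "2 \<le> t" "\<pi> \<in> Pol" "P \<in> Smset Pol (ms t)" for xs t \<pi> P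
  proof -
    obtain n where "t = n + 2" using le_add_diff_inverse2[OF \<open>2 \<le> t\<close>] by metis
    then show ?thesis using that by (auto simp: E_def bad_def any_deviation_event_def)
  qed
  ultimately show ?thesis
    by (intro bexI[of _ E] conjI ballI allI impI Vval_le_outside_deviation_event
        [unfolded confidence_width_def confidence_log_def]) auto
qed

end
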